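(* For every non-binary phylogenetic tree $T$ with $n$ leaves there exists a binary phylogenetic tree $T'$ with $n$ leaves such that $\Phi(T')>\Phi(T)$.
   Context: A phylogenetic tree with $n$ leaves is a rooted tree whose leaves are bijectively labeled by $\{1,\dots,n\}$, every internal node having at least two children; it is binary if every internal node has exactly two children. The depth $\delta_T(v)$ is the number of arcs from the root to $v$; for leaves $i,j$, $\varphi_T(i,j)=\delta_T(LCA_T(i,j))$ ($LCA$ = lowest common ancestor), and $\Phi(T)=\sum_{1\le i<j\le n}\varphi_T(i,j)$ is the total cophenetic index. *)

theory Defs
  imports Main
begin

datatype ptree = Leaf nat | Node "ptree list"

fun leaf_list :: "ptree \<Rightarrow> nat list" where
  "leaf_list (Leaf i) = [i]"
| "leaf_list (Node ts) = concat (map leaf_list ts)"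

fun internal_ok :: "ptree \<Rightarrow> bool" where
  "internal_ok (Leaf i) = True"
| "internal_ok (Node ts) = (2 \<le> length ts \<and> (\<forall>t\<in>set ts. internal_ok t))"

fun binary :: "ptree \<Rightarrow> bool" where
  "binary (Leaf i) = True"
| "binary (Node ts) = (length ts = 2 \<and> (\<forall>t\<in>set ts. binary t))"

definition phylogenetic :: "nat \<Rightarrow> ptree \<Rightarrow> bool" where
  "phylogenetic n T \<longleftrightarrow> internal_ok T \<and> distinct (leaf_list T) \<and> set (leaf_list T) = {1..n}"

fun nodes :: "ptree \<Rightarrow> (ptree \<times> nat) set" where
  "nodes (Leaf i) = {(Leaf i, 0)}"
| "nodes (Node ts) = insert (Node ts, 0) (\<Union>t\<in>set ts. (\<lambda>(s, d). (s, Suc d)) ` nodes t)"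

text \<open>Depth of the lowest common ancestor of leaves i and j: the largest depth of a
  node whose subtree contains both leaves.\<close>
definition phi :: "ptree \<Rightarrow> nat \<Rightarrow> nat \<Rightarrow> nat" where
  "phi T i j = Max {d. \<exists>s. (s, d) \<in> nodes T \<and> i \<in> set (leaf_list s) \<and> j \<in> set (leaf_list s)}"

definition Phi :: "nat \<Rightarrow> ptree \<Rightarrow> nat" where
  "Phi n T = (\<Sum>(i, j)\<in>{(i, j). 1 \<le> i \<and> i < j \<and> j \<le> n}. phi T i j)"

end

theory Submission
  imports Defs
begin

(* Binarize a phylogenetic tree T by replacing every internal node with
   children t1, ..., tk by the caterpillar Node [t1, Node [t2, ... Node [t(k-1), tk]]]
   (recursively in every child).  This only refines the tree: every cluster of T is
   still a cluster of the new tree, at depth at least its old depth, so no pair of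
   leaves gets a shallower lowest common ancestor.  At a non-binary node with k >= 3
   children, a leaf i of t2 and a leaf j of t3 have that node as their LCA in T, but in
   the caterpillar their LCA lies one level deeper; this gives one strict increase. *)

abbreviation leaves :: "ptree \<Rightarrow> nat set" where
  "leaves t \<equiv> set (leaf_list t)"

fun lca_depth :: "ptree \<Rightarrow> nat \<Rightarrow> nat \<Rightarrow> nat" where
  "lca_depth (Leaf k) i j = 0"
| "lca_depth (Node ts) i j =
     Max (insert 0 ((\<lambda>t. Suc (lca_depth t i j)) ` {t \<in> set ts. i \<in> leaves t \<and> j \<in> leaves t}))"

lemma lca_depth_Node_le_iff:
  "lca_depth (Node ts) i j \<le> m \<longleftrightarrow>
     (\<forall>t\<in>set ts. i \<in> leaves t \<and> j \<in> leaves t \<longrightarrow> Suc (lca_depth t i j) \<le> m)"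
  by auto

lemma lca_depth_child:
  assumes "t \<in> set ts" "i \<in> leaves t" "j \<in> leaves t"
  shows "Suc (lca_depth t i j) \<le> lca_depth (Node ts) i j"
  using assms by (auto intro: Max_ge)

lemma lca_depth_Node_cases:
  "lca_depth (Node ts) i j = 0 \<or>
   (\<exists>t\<in>set ts. i \<in> leaves t \<and> j \<in> leaves t \<and> lca_depth (Node ts) i j = Suc (lca_depth t i j))"
proof -
  let ?A = "insert 0 ((\<lambda>t. Suc (lca_depth t i j)) ` {t \<in> set ts. i \<in> leaves t \<and> j \<in> leaves t})"
  have "Max ?A \<in> ?A" by (rule Max_in) auto
  then show ?thesis by auto
qed

declare lca_depth.simps(2) [simp del]

lemma finite_nodes: "finite (nodes T)"
  by (induction T) auto

lemma nodes_leaves: "(s, d) \<in> nodes T \<Longrightarrow> leaves s \<subseteq> leaves T"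
  by (induction T arbitrary: s d) fastforce+

lemma nodes_depth_le_lca_depth:
  "(s, d) \<in> nodes T \<Longrightarrow> i \<in> leaves s \<Longrightarrow> j \<in> leaves s \<Longrightarrow> d \<le> lca_depth T i j"
proof (induction T arbitrary: s d)
  case (Leaf k)
  then show ?case by simp
next
  case (Node ts)
  show ?case
  proof (cases "(s, d) = (Node ts, 0)")
    case True
    then show ?thesis by simp
  next
    case False
    then obtain t d' where t: "t \<in> set ts" "(s, d') \<in> nodes t" and d: "d = Suc d'"
      using Node.prems(1) by auto
    have "d' \<le> lca_depth t i j" using Node.IH[OF t] Node.prems(2,3) .
    also have "Suc (lca_depth t i j) \<le> lca_depth (Node ts) i j"
      using nodes_leaves[OF t(2)] Node.prems(2,3) t(1) by (intro lca_depth_child) auto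
    finally show ?thesis using d by simp
  qed
qed

lemma lca_depth_attained:
  "i \<in> leaves T \<Longrightarrow> j \<in> leaves T \<Longrightarrow>
   \<exists>s. (s, lca_depth T i j) \<in> nodes T \<and> i \<in> leaves s \<and> j \<in> leaves s"
proof (induction T)
  case (Leaf k)
  then show ?case by auto
next
  case (Node ts)
  from lca_depth_Node_cases[of ts i j] show ?case
  proof (elim disjE bexE conjE)
    assume "lca_depth (Node ts) i j = 0"
    then show ?thesis using Node.prems by (intro exI[of _ "Node ts"]) simp
  next
    fix t assume t: "t \<in> set ts" "i \<in> leaves t" "j \<in> leaves t"
      and eq: "lca_depth (Node ts) i j = Suc (lca_depth t i j)"
    obtain s where s: "(s, lca_depth t i j) \<in> nodes t" "i \<in> leaves s" "j \<in> leaves s"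
      using Node.IH t by blast
    have "(s, Suc (lca_depth t i j)) \<in> nodes (Node ts)"
      using t(1) s(1) by (auto intro!: bexI[of _ t] rev_image_eqI[of "(s, lca_depth t i j)"])
    then show ?thesis using eq s(2,3) by (intro exI[of _ s]) simp
  qed
qed

lemma phi_eq_lca_depth:
  assumes "i \<in> leaves T" "j \<in> leaves T"
  shows "phi T i j = lca_depth T i j"
  unfolding phi_def
proof (rule Max_eqI)
  show "finite {d. \<exists>s. (s, d) \<in> nodes T \<and> i \<in> leaves s \<and> j \<in> leaves s}"
    by (rule finite_subset[OF _ finite_imageI[OF finite_nodes, of snd T]]) force
qed (use nodes_depth_le_lca_depth lca_depth_attained assms in blast)+

fun comb :: "ptree list \<Rightarrow> ptree" where
  "comb [] = Node []"
| "comb [t] = t"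
| "comb (t # u # us) = Node [t, comb (u # us)]"

fun bin :: "ptree \<Rightarrow> ptree" where
  "bin (Leaf k) = Leaf k"
| "bin (Node ts) = comb (map bin ts)"

lemma leaf_list_comb: "leaf_list (comb us) = concat (map leaf_list us)"
  by (induction us rule: comb.induct) auto

lemma leaf_list_bin: "leaf_list (bin T) = leaf_list T"
  by (induction T) (simp_all add: leaf_list_comb cong: map_cong)

lemma binary_comb: "us \<noteq> [] \<Longrightarrow> \<forall>u\<in>set us. binary u \<Longrightarrow> binary (comb us)"
  by (induction us rule: comb.induct) auto

lemma binary_bin: "internal_ok T \<Longrightarrow> binary (bin T)"
  by (induction T) (auto intro!: binary_comb)

lemma binary_internal_ok: "binary T \<Longrightarrow> internal_ok T"
  by (induction T) auto

lemma lca_depth_comb_less: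
  "u \<in> set us \<Longrightarrow> 2 \<le> length us \<Longrightarrow> i \<in> leaves u \<Longrightarrow> j \<in> leaves u \<Longrightarrow>
   lca_depth u i j < lca_depth (comb us) i j"
proof (induction us rule: comb.induct)
  case (3 t v us)
  let ?c = "comb (v # us)"
  show ?case
  proof (cases "u = t")
    case True
    then show ?thesis using 3(4,5) lca_depth_child[of t "[t, ?c]" i j] by simp
  next
    case False
    then have u: "u \<in> set (v # us)" using 3(2) by simp
    then have c: "i \<in> leaves ?c" "j \<in> leaves ?c"
      using 3(4,5) by (auto simp: leaf_list_comb)
    have "lca_depth u i j \<le> lca_depth ?c i j"
    proof (cases "us = []")
      case True
      then show ?thesis using u by simp
    next
      case False
      then show ?thesis using 3(1)[OF u _ 3(4,5)] by (cases us) auto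
    qed
    also have "\<dots> < lca_depth (comb (t # v # us)) i j"
      using c lca_depth_child[of ?c "[t, ?c]" i j] by simp
    finally show ?thesis .
  qed
qed auto

lemma lca_depth_bin_mono: "internal_ok T \<Longrightarrow> lca_depth T i j \<le> lca_depth (bin T) i j"
proof (induction T)
  case (Leaf k)
  then show ?case by simp
next
  case (Node ts)
  have "Suc (lca_depth t i j) \<le> lca_depth (comb (map bin ts)) i j"
    if t: "t \<in> set ts" "i \<in> leaves t" "j \<in> leaves t" for t
  proof -
    have "lca_depth t i j \<le> lca_depth (bin t) i j" using Node t(1) by simp
    also have "\<dots> < lca_depth (comb (map bin ts)) i j"
      using Node.prems t by (intro lca_depth_comb_less) (auto simp: leaf_list_bin)
    finally show ?thesis by simp
  qed
  then show ?case by (simp add: lca_depth_Node_le_iff)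
qed

lemma child_unique:
  "distinct (concat (map leaf_list ts)) \<Longrightarrow> t \<in> set ts \<Longrightarrow> u \<in> set ts \<Longrightarrow>
   x \<in> leaves t \<Longrightarrow> x \<in> leaves u \<Longrightarrow> t = u"
  by (induction ts) auto

lemma lca_depth_unique_child:
  assumes dist: "distinct (concat (map leaf_list ts))"
    and t: "t \<in> set ts" "i \<in> leaves t" "j \<in> leaves t"
  shows "lca_depth (Node ts) i j = Suc (lca_depth t i j)"
  using lca_depth_Node_cases[of ts i j] lca_depth_child[OF t] child_unique[OF dist t(1)] t(2)
  by auto

lemma leaf_list_nonempty: "internal_ok T \<Longrightarrow> leaf_list T \<noteq> []"
proof (induction T)
  case (Node ts)
  then obtain t where "t \<in> set ts" by (cases ts) auto
  with Node show ?case by auto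
qed simp

lemma wide_node_gain:
  assumes ok: "internal_ok (Node ts)" and dist: "distinct (leaf_list (Node ts))"
    and wide: "3 \<le> length ts"
  shows "\<exists>i j. i \<noteq> j \<and> i \<in> leaves (Node ts) \<and> j \<in> leaves (Node ts) \<and>
           lca_depth (Node ts) i j < lca_depth (bin (Node ts)) i j"
proof -
  obtain a b c rest where ts: "ts = a # b # c # rest"
    using wide by (cases ts; cases "tl ts"; cases "tl (tl ts)") auto
  obtain i j where i: "i \<in> leaves b" and j: "j \<in> leaves c"
    using leaf_list_nonempty[of b] leaf_list_nonempty[of c] ok ts
    by (fastforce simp: neq_Nil_conv)
  have disj: "leaves b \<inter> leaves c = {}" using dist ts by auto
  have no_common: "\<not> (i \<in> leaves t \<and> j \<in> leaves t)" if "t \<in> set ts" for t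
    using child_unique[of ts b t i] child_unique[of ts c t j] dist that i j disj ts by auto
  have "lca_depth (Node ts) i j = 0"
    using lca_depth_Node_cases[of ts i j] no_common by auto
  moreover have "0 < lca_depth (bin (Node ts)) i j"
  proof -
    let ?tail = "comb (map bin (b # c # rest))"
    have "bin (Node ts) = Node [bin a, ?tail]" using ts by simp
    moreover have "i \<in> leaves ?tail" "j \<in> leaves ?tail"
      using i j by (simp_all add: leaf_list_comb leaf_list_bin)
    ultimately show ?thesis using lca_depth_child[of ?tail "[bin a, ?tail]" i j] by simp
  qed
  moreover have "i \<noteq> j" using i j disj by auto
  ultimately show ?thesis using i j ts by (intro exI[of _ i] exI[of _ j]) auto
qed

text \<open>A non-binary tree contains either a non-binary child, whose strict gain survives
  one level up, or is itself a node with at least three children.\<close>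
lemma lca_depth_bin_strict:
  "internal_ok T \<Longrightarrow> distinct (leaf_list T) \<Longrightarrow> \<not> binary T \<Longrightarrow>
   \<exists>i j. i \<noteq> j \<and> i \<in> leaves T \<and> j \<in> leaves T \<and> lca_depth T i j < lca_depth (bin T) i j"
proof (induction T)
  case (Leaf k)
  then show ?case by simp
next
  case (Node ts)
  show ?case
  proof (cases "\<forall>t\<in>set ts. binary t")
    case True
    then have "3 \<le> length ts" using Node.prems by auto
    then show ?thesis using wide_node_gain Node.prems(1,2) by blast
  next
    case False
    then obtain c where c: "c \<in> set ts" "\<not> binary c" by blast
    have dist: "distinct (concat (map leaf_list ts))" using Node.prems(2) by simp
    then have "distinct (leaf_list c)" using c(1) by (auto simp: distinct_concat_iff)
    then obtain i j where ij: "i \<noteq> j" "i \<in> leaves c" "j \<in> leaves c"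
        and gain: "lca_depth c i j < lca_depth (bin c) i j"
      using Node.IH[OF c(1)] Node.prems(1) c by auto
    have "lca_depth (Node ts) i j = Suc (lca_depth c i j)"
      using lca_depth_unique_child[OF dist c(1) ij(2,3)] .
    also have "\<dots> < Suc (lca_depth (bin c) i j)" using gain by simp
    also have "\<dots> \<le> lca_depth (bin (Node ts)) i j"
      using Node.prems(1) c(1) ij(2,3) lca_depth_comb_less[of "bin c" "map bin ts" i j]
      by (simp add: leaf_list_bin Suc_le_eq)
    finally show ?thesis using c(1) ij(1-3) by (intro exI[of _ i] exI[of _ j]) auto
  qed
qed

text \<open>phi is symmetric, so Phi, summing over i < j, counts each unordered pair once.\<close>
lemma phi_sym: "phi T i j = phi T j i"
  unfolding phi_def by (rule arg_cong[where f = Max]) blast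

lemma Phi_strict_mono:
  assumes le: "\<And>i j. i \<in> {1..n} \<Longrightarrow> j \<in> {1..n} \<Longrightarrow> phi T i j \<le> phi T' i j"
    and ij: "i \<in> {1..n}" "j \<in> {1..n}" "i \<noteq> j"
    and less: "phi T i j < phi T' i j"
  shows "Phi n T < Phi n T'"
proof -
  let ?S = "{(i, j). 1 \<le> i \<and> i < j \<and> j \<le> n}"
  have fin: "finite ?S" by (rule finite_subset[of _ "{1..n} \<times> {1..n}"]) auto
  have pair: "(min i j, max i j) \<in> ?S" using ij by auto
  have "phi T (min i j) (max i j) < phi T' (min i j) (max i j)"
    using less phi_sym[of T] phi_sym[of T'] by (cases "i < j") (auto simp: min_def max_def)
  then have "\<exists>p\<in>?S. (\<lambda>(i, j). phi T i j) p < (\<lambda>(i, j). phi T' i j) p"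
    using pair by (intro bexI[of _ "(min i j, max i j)"]) auto
  then show ?thesis
    unfolding Phi_def by (intro sum_strict_mono_ex1[OF fin]) (use le in auto)
qed

theorem mainTheorem5:
  fixes n :: nat and T :: ptree
  assumes "phylogenetic n T" and "\<not> binary T"
  shows "\<exists>T'. phylogenetic n T' \<and> binary T' \<and> Phi n T' > Phi n T"
proof -
  have ok: "internal_ok T" and dist: "distinct (leaf_list T)" and lv: "leaves T = {1..n}"
    using assms(1) unfolding phylogenetic_def by auto
  have binary: "binary (bin T)" using binary_bin[OF ok] .
  have phylo: "phylogenetic n (bin T)"
    using binary_internal_ok[OF binary] dist lv unfolding phylogenetic_def leaf_list_bin by auto
  have phi_lca: "phi T i j = lca_depth T i j" "phi (bin T) i j = lca_depth (bin T) i j"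
    if "i \<in> {1..n}" "j \<in> {1..n}" for i j
    using that lv by (simp_all add: phi_eq_lca_depth leaf_list_bin)
  obtain i j where ij: "i \<noteq> j" "i \<in> leaves T" "j \<in> leaves T"
      and gain: "lca_depth T i j < lca_depth (bin T) i j"
    using lca_depth_bin_strict[OF ok dist assms(2)] by blast
  have "Phi n T < Phi n (bin T)"
    using ij gain lv phi_lca lca_depth_bin_mono[OF ok]
    by (intro Phi_strict_mono[of n T "bin T" i j]) auto
  with binary phylo show ?thesis by blast
qed

end
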